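(* Let $n\ge1$, identify $\mathbb{R}^{n+1}=\mathbb{R}^n\times\mathbb{R}$, and let $K\subset\mathbb{R}^{n+1}$ be a convex compact set containing a point $(x_*,y_* )$ with $y_*\le0$. Then the following are equivalent: (a) for every positive-valued continuous function $f\colon\mathbb{R}^n\to\mathbb{R}$ whose epigraph $L$ satisfies $K\cap L=\emptyset$, the upper and lower equidistant functions associated with $K$ and $L$ satisfy $G^-(x)=G^+(x)$ for all $x\in\mathbb{R}^n$; (b) the same holds for every positive-valued convex function $f\colon\mathbb{R}^n\to\mathbb{R}$ whose epigraph is disjoint from $K$; (c) there exist no point $x_0\in\mathbb{R}^n$ and real numbers $0<y_1<y_2$ such that $(x_0,y_1)\notin K$ and $(x_0,y_2)\in K$.
   Context: $d(p,A)=\inf\{|p-q|\mid q\in A\}$ (Euclidean distance); $L=\{(x,y)\mid f(x)\le y\}$. The upper and lower equidistant functions are $G^+(x)=\sup\{y\mid d((x,y),K)=d((x,y),L)\}$ and $G^-(x)=\inf\{y\mid d((x,y),K)=d((x,y),L)\}$ (real numbers under these assumptions). *)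

theory Defs
  imports "HOL-Analysis.Analysis"
begin

text \<open>Points of R^(n+1) = R^n x R are pairs; the norm on the product type is the
Euclidean one, so dist and infdist are Euclidean distances.\<close>

definition epi_graph :: "('a \<Rightarrow> real) \<Rightarrow> ('a \<times> real) set" where
  "epi_graph f = {(x, y). f x \<le> y}"

definition equidist_upper :: "('a::euclidean_space \<times> real) set \<Rightarrow> ('a \<times> real) set \<Rightarrow> 'a \<Rightarrow> real" where
  "equidist_upper K L x = Sup {y. infdist (x, y) K = infdist (x, y) L}"

definition equidist_lower :: "('a::euclidean_space \<times> real) set \<Rightarrow> ('a \<times> real) set \<Rightarrow> 'a \<Rightarrow> real" where
  "equidist_lower K L x = Inf {y. infdist (x, y) K = infdist (x, y) L}"

end

(*
  Fix x and let phi(y) = d((x,y),K) - d((x,y),L).  Far below, phi < 0, because K has a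
  point at height <= 0 while L stays above a positive level near x; at y = f(x), phi > 0.
  Hence the set of equidistant heights over x is nonempty and bounded, and
  G^-(x) = G^+(x) says exactly that it is a singleton.

  (c) => (a): if the fibres of K are closed downwards above height 0, then a point
  (x, y + t) above an equidistant point (x, y) is strictly closer to L than to K, so phi
  has only one zero.

  (b) => (c): if (x0,y1) is not in K but (x0,y2) is, convexity separates x0 from the
  shadow of the part of K below height y1.  At a point (x,yF) of K extreme in the
  separating direction, (x, y1/2) is far from K, and a steep convex wall f missing K
  passes close to it.  So phi is negative far below, positive at y1/2 and negative at
  (x,yF), which gives two distinct equidistant heights.

  (a) => (b) because convex functions are continuous.
*)
theory Submission
  imports Defs
begin

lemma mem_epi_graph [simp]: "(x, y) \<in> epi_graph f \<longleftrightarrow> f x \<le> y"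
  by (simp add: epi_graph_def)

lemma epi_graph_nonempty: "epi_graph f \<noteq> {}"
  using mem_epi_graph[of _ "f _" f] by blast

lemma closed_epi_graph:
  assumes "continuous_on UNIV f"
  shows "closed (epi_graph f)"
proof -
  have "epi_graph f = {p. f (fst p) \<le> snd p}"
    by (auto simp: epi_graph_def)
  then show ?thesis
    by (simp add: closed_Collect_le continuous_on_compose2[OF assms] continuous_on_fst continuous_on_snd)
qed

lemma dist_Pair_power2:
  fixes a c :: "'a::metric_space" and b d :: real
  shows "(dist (a, b) (c, d))\<^sup>2 = (dist a c)\<^sup>2 + (b - d)\<^sup>2"
  by (simp add: dist_Pair_Pair dist_real_def)

lemma exists_closer_point_less:
  fixes f :: "'a::real_normed_vector \<Rightarrow> real"
  assumes "continuous_on UNIV f" and "f z < c" and "x \<noteq> z"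
  shows "\<exists>z'. f z' < c \<and> dist x z' < dist x z"
proof -
  have "((\<lambda>s. z + s *\<^sub>R (x - z)) \<longlongrightarrow> z) (at_right 0)"
    by (auto intro!: tendsto_eq_intros)
  moreover have "isCont f z"
    using assms(1) by (simp add: continuous_on_eq_continuous_at)
  ultimately have "((\<lambda>s. f (z + s *\<^sub>R (x - z))) \<longlongrightarrow> f z) (at_right 0)"
    by (rule isCont_tendsto_compose[rotated])
  then have "\<forall>\<^sub>F s in at_right 0. f (z + s *\<^sub>R (x - z)) < c"
    using assms(2) by (rule order_tendstoD(2))
  moreover have "\<forall>\<^sub>F s in at_right 0. s \<in> {0<..<1::real}"
    by (rule eventually_at_right_real) simp
  ultimately obtain s :: real where s: "f (z + s *\<^sub>R (x - z)) < c" "0 < s" "s < 1"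
    using eventually_happens'[OF trivial_limit_at_right_real eventually_conj] by fastforce
  have "x - (z + s *\<^sub>R (x - z)) = (1 - s) *\<^sub>R (x - z)"
    by (simp add: algebra_simps)
  then have "dist x (z + s *\<^sub>R (x - z)) = (1 - s) * dist x z"
    using s by (simp add: dist_norm)
  also have "\<dots> < dist x z"
    using s assms(3) by (simp add: mult_less_cancel_right2)
  finally show ?thesis
    using s(1) by blast
qed

lemma infdist_epi_graph_shift_up_less:
  fixes f :: "'a::euclidean_space \<Rightarrow> real"
  assumes cont: "continuous_on UNIV f" and below: "y < f x" and "0 < t"
  shows "infdist (x, y + t) (epi_graph f) < infdist (x, y) (epi_graph f)"
proof -
  let ?L = "epi_graph f"
  obtain z w where zw: "(z, w) \<in> ?L" "infdist (x, y) ?L = dist (x, y) (z, w)"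
    using infdist_attains_inf[OF closed_epi_graph[OF cont] epi_graph_nonempty] by (metis surj_pair)
  have "\<exists>l\<in>?L. dist (x, y + t) l < dist (x, y) (z, w)"
  proof (cases "y < w")
    case True
    have "(y + t - max w (y + t))\<^sup>2 < (y - w)\<^sup>2"
    proof (cases "w \<le> y + t")
      case True
      then show ?thesis using \<open>y < w\<close> by simp
    next
      case False
      then have "(w - (y + t))\<^sup>2 < (w - y)\<^sup>2" using \<open>0 < t\<close> by (intro power_strict_mono) auto
      then show ?thesis using False by (simp add: power2_commute)
    qed
    then have "(dist (x, y + t) (z, max w (y + t)))\<^sup>2 < (dist (x, y) (z, w))\<^sup>2"
      by (simp add: dist_Pair_power2)
    then have "dist (x, y + t) (z, max w (y + t)) < dist (x, y) (z, w)"
      by (rule power2_less_imp_less) simp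
    moreover have "(z, max w (y + t)) \<in> ?L"
      using zw by simp
    ultimately show ?thesis by blast
  next
    case False
    then have "f z < y + t" "x \<noteq> z"
      using zw below \<open>0 < t\<close> by auto
    then obtain z' where "f z' < y + t" "dist x z' < dist x z"
      using exists_closer_point_less[OF cont] by blast
    then have "dist (x, y + t) (z', y + t) < dist x z"
      by (simp add: dist_Pair_Pair)
    also have "\<dots> \<le> dist (x, y) (z, w)"
      using dist_fst_le[of "(x, y)" "(z, w)"] by simp
    finally have "dist (x, y + t) (z', y + t) < dist (x, y) (z, w)" .
    moreover have "(z', y + t) \<in> ?L"
      using \<open>f z' < y + t\<close> by simp
    ultimately show ?thesis by blast
  qed
  then show ?thesis
    using zw infdist_le by (metis le_less_trans)
qed

definition equidist_heights :: "('a::euclidean_space \<times> real) set \<Rightarrow> ('a \<times> real) set \<Rightarrow> 'a \<Rightarrow> real set" where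
  "equidist_heights K L x = {y. infdist (x, y) K = infdist (x, y) L}"

lemma equidist_lower_eq_Inf: "equidist_lower K L x = Inf (equidist_heights K L x)"
  by (simp add: equidist_lower_def equidist_heights_def)

lemma equidist_upper_eq_Sup: "equidist_upper K L x = Sup (equidist_heights K L x)"
  by (simp add: equidist_upper_def equidist_heights_def)

lemma equidist_heights_less:
  fixes K :: "('a::euclidean_space \<times> real) set"
  assumes "closed K" and "K \<noteq> {}" and "K \<inter> epi_graph f = {}"
    and "y \<in> equidist_heights K (epi_graph f) x"
  shows "y < f x"
proof (rule ccontr)
  assume "\<not> y < f x"
  then have "(x, y) \<in> epi_graph f" by simp
  moreover from this have "(x, y) \<in> K"
    using assms(4) in_closed_iff_infdist_zero[OF assms(1,2)] by (simp add: equidist_heights_def)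
  ultimately show False using assms(3) by blast
qed

definition down_closed_above_zero :: "('a \<times> real) set \<Rightarrow> bool" where
  "down_closed_above_zero K \<longleftrightarrow> (\<forall>x y1 y2. 0 < y1 \<longrightarrow> y1 < y2 \<longrightarrow> (x, y2) \<in> K \<longrightarrow> (x, y1) \<in> K)"

lemma down_closed_above_zeroD:
  fixes K :: "('a::topological_space \<times> real) set"
  assumes "closed K" and "down_closed_above_zero K" and "(x, y) \<in> K" and "0 \<le> s" and "s \<le> y"
  shows "(x, s) \<in> K"
proof -
  have pos: "(x, s') \<in> K" if "0 < s'" "s' \<le> y" for s'
  proof (cases "s' = y")
    case False
    then have "s' < y" using that(2) by simp
    then show ?thesis
      using assms(2,3) that(1) unfolding down_closed_above_zero_def by blast
  qed (use assms(3) in simp)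
  show ?thesis
  proof (cases "0 < s")
    case True
    then show ?thesis using pos assms(5) by simp
  next
    case False
    with assms(4) have "s = 0" by simp
    show ?thesis
    proof (cases "y = 0")
      case True
      then show ?thesis using assms(3) \<open>s = 0\<close> by simp
    next
      case False
      then have "0 < y" using assms(4,5) by simp
      have "(\<lambda>n. (x, y * inverse (real (Suc n)))) \<longlonglongrightarrow> (x, y * 0)"
        by (intro tendsto_intros LIMSEQ_inverse_real_of_nat)
      moreover have "(x, y * inverse (real (Suc n))) \<in> K" for n
        using \<open>0 < y\<close> by (intro pos) (simp_all add: field_simps)
      ultimately show ?thesis
        using closed_sequentially[OF assms(1)] \<open>s = 0\<close> by fastforce
    qed
  qed
qed

text \<open>Here \<open>a\<close> and \<open>b\<close> are the squared horizontal distances from \<open>x\<close> of a point \<open>(u, v)\<close>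
  of \<open>K\<close> and of a nearest point \<open>(z, w)\<close> of \<open>L\<close> to the equidistant point \<open>(x, y)\<close>; \<open>r\<close> and
  \<open>d\<close> are the distances of \<open>(x, y)\<close> and \<open>(x, y + t)\<close> from \<open>L\<close>.\<close>

lemma equidistant_shift_sq_less_below_zero:
  fixes a b d r t v w y :: real
  assumes "0 < t" and "0 < w" and "y < 0" and "0 < v" and "v \<le> y + t"
    and r: "r\<^sup>2 = b + (y - w)\<^sup>2"
    and d: "d\<^sup>2 \<le> b + (y + t - max w (y + t))\<^sup>2"
    and far: "r\<^sup>2 \<le> a + y\<^sup>2"
  shows "d\<^sup>2 < a + (y + t - v)\<^sup>2"
proof -
  have "(- y)\<^sup>2 < (w - y)\<^sup>2"
    using assms(2,3) by (intro power_strict_mono) auto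
  then have b: "b < a"
    using r far by (simp add: power2_commute)
  show ?thesis
  proof (cases "w \<le> y + t")
    case True
    then have "d\<^sup>2 \<le> b"
      using d by simp
    then show ?thesis
      using b zero_le_power2[of "y + t - v"] by linarith
  next
    case False
    have "0 < y + t" "y + t < t"
      using assms(3-5) by auto
    then have "(y + t) * (y + t) < t * w"
      using False by (subst mult.commute[of t]) (intro mult_strict_mono, auto)
    moreover have "(y + t) * (y + t) = y\<^sup>2 + 2 * (t * y) + t\<^sup>2"
      and "(y + t - w)\<^sup>2 = (y - w)\<^sup>2 + 2 * (t * y) - 2 * (t * w) + t\<^sup>2"
      by (simp_all add: power2_eq_square algebra_simps)
    moreover have "0 < t * w"
      using assms(1,2) by simp
    moreover have "d\<^sup>2 \<le> b + (y + t - w)\<^sup>2"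
      using d False by simp
    ultimately show ?thesis
      using r far zero_le_power2[of "y + t - v"] by linarith
  qed
qed

lemma equidistant_shift_sq_less:
  fixes a b d r t v w y :: real
  assumes "0 < t" and "0 < w" and "0 \<le> d" and "d < r"
    and r: "r\<^sup>2 = b + (y - w)\<^sup>2"
    and d: "d\<^sup>2 \<le> b + (y + t - max w (y + t))\<^sup>2"
    and far: "\<And>s. s = v \<or> 0 \<le> s \<and> s \<le> v \<Longrightarrow> r\<^sup>2 \<le> a + (y - s)\<^sup>2"
    and v: "v \<le> max 0 (y + t)"
  shows "d\<^sup>2 < a + (y + t - v)\<^sup>2"
proof -
  consider "v \<le> 0" | "0 < v" "0 \<le> y" | "0 < v" "y < 0"
    by linarith
  then show ?thesis
  proof cases
    case 1
    have "(y + t - max w (y + t))\<^sup>2 \<le> (y + t - w)\<^sup>2"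
      by (cases "w \<le> y + t") simp_all
    moreover have "(y + t - w)\<^sup>2 = (y - w)\<^sup>2 + 2 * (t * y) - 2 * (t * w) + t\<^sup>2"
      and "(y + t - v)\<^sup>2 = (y - v)\<^sup>2 + 2 * (t * y) - 2 * (t * v) + t\<^sup>2"
      by (simp_all add: power2_eq_square algebra_simps)
    moreover have "t * v < t * w"
      using 1 assms(1,2) by (intro mult_strict_left_mono) auto
    moreover have "r\<^sup>2 \<le> a + (y - v)\<^sup>2"
      using far by blast
    ultimately show ?thesis
      using d r by linarith
  next
    case 2
    have "r\<^sup>2 \<le> a + (y - min y v)\<^sup>2"
      using 2 by (intro far) simp
    moreover have "(y - min y v)\<^sup>2 \<le> (y + t - v)\<^sup>2"
      using 2 v assms(1) by (intro power_mono) auto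
    moreover have "d\<^sup>2 < r\<^sup>2"
      using assms(3,4) by (intro power_strict_mono) auto
    ultimately show ?thesis
      by linarith
  next
    case 3
    then show ?thesis
      using equidistant_shift_sq_less_below_zero[OF assms(1,2) 3(2,1) _ r d] v far[of 0] by simp
  qed
qed

lemma infdist_epi_graph_less_dist_low_point:
  fixes K :: "('a::euclidean_space \<times> real) set"
  assumes "closed K" and "down_closed_above_zero K"
    and cont: "continuous_on UNIV f" and pos: "\<And>x. 0 < f x" and disj: "K \<inter> epi_graph f = {}"
    and equi: "y \<in> equidist_heights K (epi_graph f) x" and "0 < t"
    and uv: "(u, v) \<in> K" and low: "v \<le> max 0 (y + t)"
  shows "infdist (x, y + t) (epi_graph f) < dist (x, y + t) (u, v)"
proof -
  let ?L = "epi_graph f"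
  have "y < f x"
    using equidist_heights_less[OF assms(1) _ disj equi] uv by blast
  obtain z w where zw: "(z, w) \<in> ?L" "infdist (x, y) ?L = dist (x, y) (z, w)"
    using infdist_attains_inf[OF closed_epi_graph[OF cont] epi_graph_nonempty] by (metis surj_pair)
  have "0 < w"
    using zw(1) pos[of z] by simp
  define r where "r = infdist (x, y) ?L"
  define d where "d = infdist (x, y + t) ?L"
  have "d < r"
    unfolding d_def r_def using infdist_epi_graph_shift_up_less[OF cont \<open>y < f x\<close> \<open>0 < t\<close>] .
  have r_sq: "r\<^sup>2 = (dist x z)\<^sup>2 + (y - w)\<^sup>2"
    using zw(2) by (simp add: r_def dist_Pair_power2)
  have "d \<le> dist (x, y + t) (z, max w (y + t))"
    unfolding d_def using zw(1) by (intro infdist_le) simp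
  then have d_sq: "d\<^sup>2 \<le> (dist x z)\<^sup>2 + (y + t - max w (y + t))\<^sup>2"
    by (metis dist_Pair_power2 infdist_nonneg d_def power_mono)
  have far: "r\<^sup>2 \<le> (dist x u)\<^sup>2 + (y - s)\<^sup>2" if "s = v \<or> 0 \<le> s \<and> s \<le> v" for s
  proof -
    have "(u, s) \<in> K"
      using that down_closed_above_zeroD[OF assms(1,2) uv] uv by blast
    then have "r \<le> dist (x, y) (u, s)"
      using infdist_le[of "(u, s)" K "(x, y)"] equi by (simp add: r_def equidist_heights_def)
    then show ?thesis
      by (metis dist_Pair_power2 infdist_nonneg r_def power_mono)
  qed
  have "0 \<le> d"
    by (simp add: d_def infdist_nonneg)
  then have "d\<^sup>2 < (dist x u)\<^sup>2 + (y + t - v)\<^sup>2"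
    using equidistant_shift_sq_less[OF \<open>0 < t\<close> \<open>0 < w\<close> _ \<open>d < r\<close> r_sq d_sq far low] by blast
  then show ?thesis
    unfolding d_def by (metis dist_Pair_power2 power2_less_imp_less zero_le_dist)
qed

lemma infdist_epi_graph_less_above_equidistant:
  fixes K :: "('a::euclidean_space \<times> real) set"
  assumes "closed K" and "K \<noteq> {}" and "down_closed_above_zero K"
    and cont: "continuous_on UNIV f" and pos: "\<And>x. 0 < f x" and disj: "K \<inter> epi_graph f = {}"
    and equi: "y \<in> equidist_heights K (epi_graph f) x" and "0 < t"
  shows "infdist (x, y + t) (epi_graph f) < infdist (x, y + t) K"
proof -
  note close = infdist_epi_graph_less_dist_low_point[OF assms(1,3) cont pos disj equi \<open>0 < t\<close>]
  obtain u v where uv: "(u, v) \<in> K" "infdist (x, y + t) K = dist (x, y + t) (u, v)"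
    using infdist_attains_inf[OF assms(1,2)] by (metis surj_pair)
  show ?thesis
  proof (cases "v \<le> max 0 (y + t)")
    case True
    then show ?thesis
      using close uv by simp
  next
    case False
    have "(u, max 0 (y + t)) \<in> K"
      using False by (intro down_closed_above_zeroD[OF assms(1,3) uv(1)]) auto
    then have "infdist (x, y + t) (epi_graph f) < dist (x, y + t) (u, max 0 (y + t))"
      by (rule close) simp
    also have "dist (y + t) (max 0 (y + t)) \<le> dist (y + t) v"
      using False by (auto simp: dist_real_def)
    then have "dist (x, y + t) (u, max 0 (y + t)) \<le> dist (x, y + t) (u, v)"
      by (simp add: dist_Pair_Pair)
    finally show ?thesis
      using uv by simp
  qed
qed

text \<open>Here \<open>\<rho>\<close> is the horizontal distance from \<open>x\<close> of a point \<open>(xs, ys)\<close> of \<open>K\<close>, \<open>c\<close> that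
  of a point \<open>(z, w)\<close> of \<open>L\<close>, and \<open>m\<close> a lower bound of \<open>f\<close> on the ball of radius \<open>\<rho>\<close>.\<close>

lemma far_below_sq_less:
  fixes c m w y ys \<rho> :: real
  assumes "0 < m" and "ys \<le> 0" and "0 < w" and "0 \<le> c" and "0 \<le> \<rho>"
    and "c < \<rho> \<Longrightarrow> m \<le> w"
    and y: "y \<le> ys - \<rho>\<^sup>2 / m - 1"
  shows "\<rho>\<^sup>2 + (y - ys)\<^sup>2 < c\<^sup>2 + (y - w)\<^sup>2"
proof -
  have "0 \<le> \<rho>\<^sup>2 / m"
    using assms(1) by simp
  then have "y < ys"
    using y by linarith
  show ?thesis
  proof (cases "c < \<rho>")
    case False
    then have "\<rho>\<^sup>2 \<le> c\<^sup>2"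
      using assms(5) by (intro power_mono) auto
    moreover have "(ys - y)\<^sup>2 < (w - y)\<^sup>2"
      using \<open>y < ys\<close> assms(2,3) by (intro power_strict_mono) auto
    ultimately show ?thesis
      by (simp add: power2_commute)
  next
    case True
    then have "(m - y)\<^sup>2 \<le> (w - y)\<^sup>2"
      using assms(6) \<open>y < ys\<close> assms(1,2) by (intro power_mono) auto
    moreover have "m * (2 * (\<rho>\<^sup>2 / m) + 2) \<le> (m - ys) * (m + ys - 2 * y)"
      using y assms(1,2) \<open>0 \<le> \<rho>\<^sup>2 / m\<close> by (intro mult_mono) auto
    moreover have "m * (2 * (\<rho>\<^sup>2 / m) + 2) = 2 * \<rho>\<^sup>2 + 2 * m"
      using assms(1) by (simp add: algebra_simps)
    moreover have "(m - y)\<^sup>2 - (y - ys)\<^sup>2 = (m - ys) * (m + ys - 2 * y)"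
      by (simp add: power2_eq_square algebra_simps)
    ultimately show ?thesis
      using assms(1) zero_le_power2[of c] zero_le_power2[of \<rho>] power2_commute[of y w] by linarith
  qed
qed

lemma infdist_less_infdist_epi_graph_below:
  fixes K :: "('a::euclidean_space \<times> real) set"
  assumes cont: "continuous_on UNIV f" and pos: "\<And>x. 0 < f x"
    and "(xs, ys) \<in> K" and "ys \<le> 0"
  shows "\<exists>yl. \<forall>y\<le>yl. infdist (x, y) K < infdist (x, y) (epi_graph f)"
proof -
  define \<rho> where "\<rho> = dist x xs"
  have "cball x \<rho> \<noteq> {}"
    by (simp add: \<rho>_def)
  then obtain z0 where min: "\<And>z. z \<in> cball x \<rho> \<Longrightarrow> f z0 \<le> f z"
    using continuous_attains_inf[OF compact_cball _ continuous_on_subset[OF cont subset_UNIV]] by blast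
  define m where "m = f z0"
  have "0 < m"
    by (simp add: m_def pos)
  have "infdist (x, y) K < infdist (x, y) (epi_graph f)" if y: "y \<le> ys - \<rho>\<^sup>2 / m - 1" for y
  proof -
    obtain z w where zw: "(z, w) \<in> epi_graph f" "infdist (x, y) (epi_graph f) = dist (x, y) (z, w)"
      using infdist_attains_inf[OF closed_epi_graph[OF cont] epi_graph_nonempty] by (metis surj_pair)
    have "0 < w"
      using zw(1) pos[of z] by simp
    have near: "m \<le> w" if "dist x z < \<rho>"
      using zw(1) min[of z] that by (simp add: m_def dist_commute)
    have "\<rho>\<^sup>2 + (y - ys)\<^sup>2 < (dist x z)\<^sup>2 + (y - w)\<^sup>2"
      by (rule far_below_sq_less[OF \<open>0 < m\<close> \<open>ys \<le> 0\<close> \<open>0 < w\<close> zero_le_dist _ near y])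
        (simp add: \<rho>_def)
    then have "dist (x, y) (xs, ys) < dist (x, y) (z, w)"
      by (metis dist_Pair_power2 power2_less_imp_less zero_le_dist \<rho>_def)
    then show ?thesis
      using infdist_le[OF \<open>(xs, ys) \<in> K\<close>, of "(x, y)"] zw(2) by simp
  qed
  then show ?thesis
    by blast
qed

lemma equidist_height_between:
  assumes "infdist (x, a) K \<le> infdist (x, a) L" and "infdist (x, b) L \<le> infdist (x, b) K"
  shows "\<exists>y. min a b \<le> y \<and> y \<le> max a b \<and> y \<in> equidist_heights K L x"
proof -
  define \<phi> where "\<phi> y = infdist (x, y) K - infdist (x, y) L" for y
  have cont: "continuous_on I \<phi>" for I
    unfolding \<phi>_def by (intro continuous_intros)
  have "\<phi> a \<le> 0" "0 \<le> \<phi> b"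
    using assms by (simp_all add: \<phi>_def)
  then obtain y where "min a b \<le> y" "y \<le> max a b" "\<phi> y = 0"
  proof (cases "a \<le> b")
    case True
    then show ?thesis
      using IVT'[OF \<open>\<phi> a \<le> 0\<close> \<open>0 \<le> \<phi> b\<close> True cont] that by auto
  next
    case False
    then show ?thesis
      using IVT2'[OF \<open>\<phi> a \<le> 0\<close> \<open>0 \<le> \<phi> b\<close> _ cont] that by auto
  qed
  then show ?thesis
    by (auto simp: \<phi>_def equidist_heights_def)
qed

lemma equidist_heights_nonempty_bounded:
  fixes K :: "('a::euclidean_space \<times> real) set"
  assumes "closed K" and "(xs, ys) \<in> K" and "ys \<le> 0"
    and cont: "continuous_on UNIV f" and pos: "\<And>x. 0 < f x" and disj: "K \<inter> epi_graph f = {}"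
  shows "equidist_heights K (epi_graph f) x \<noteq> {}"
    and "bdd_below (equidist_heights K (epi_graph f) x)"
    and "bdd_above (equidist_heights K (epi_graph f) x)"
proof -
  let ?S = "equidist_heights K (epi_graph f) x"
  have "K \<noteq> {}" using assms(2) by blast
  obtain yl where below: "\<And>y. y \<le> yl \<Longrightarrow> infdist (x, y) K < infdist (x, y) (epi_graph f)"
    using infdist_less_infdist_epi_graph_below[OF cont pos assms(2,3)] by blast
  have "(x, f x) \<notin> K"
    using disj by auto
  then have "infdist (x, f x) (epi_graph f) \<le> infdist (x, f x) K"
    by (simp add: infdist_nonneg)
  then show "?S \<noteq> {}"
    using equidist_height_between[of x yl K "epi_graph f" "f x"] below[of yl] by fastforce
  have "yl < y" if "y \<in> ?S" for y
    using below[of y] that by (force simp: equidist_heights_def)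
  then show "bdd_below ?S"
    by (intro bdd_belowI[of _ yl]) (simp add: less_imp_le)
  have "y < f x" if "y \<in> ?S" for y
    using equidist_heights_less[OF assms(1) \<open>K \<noteq> {}\<close> disj that] .
  then show "bdd_above ?S"
    by (intro bdd_aboveI[of _ "f x"]) (simp add: less_imp_le)
qed

lemma equidist_lower_eq_upper_if_down_closed:
  fixes K :: "('a::euclidean_space \<times> real) set"
  assumes "closed K" and "down_closed_above_zero K" and "(xs, ys) \<in> K" and "ys \<le> 0"
    and cont: "continuous_on UNIV f" and pos: "\<And>x. 0 < f x" and disj: "K \<inter> epi_graph f = {}"
  shows "equidist_lower K (epi_graph f) x = equidist_upper K (epi_graph f) x"
proof -
  let ?S = "equidist_heights K (epi_graph f) x"
  have "K \<noteq> {}" using assms(3) by blast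
  obtain y0 where "y0 \<in> ?S"
    using equidist_heights_nonempty_bounded(1)[OF assms(1,3,4) cont pos disj] by blast
  have not_above: "y \<notin> ?S" if "y' \<in> ?S" "y' < y" for y y'
    using infdist_epi_graph_less_above_equidistant[OF assms(1) \<open>K \<noteq> {}\<close> assms(2) cont pos disj that(1),
        of "y - y'"] that(2) by (simp add: equidist_heights_def)
  have "y = y0" if "y \<in> ?S" for y
    using not_above[of y0 y] not_above[of y y0] that \<open>y0 \<in> ?S\<close>
    by (cases y y0 rule: linorder_cases) auto
  then have "?S = {y0}"
    using \<open>y0 \<in> ?S\<close> by blast
  then show ?thesis
    by (simp add: equidist_lower_eq_Inf equidist_upper_eq_Sup)
qed

lemma equidist_lower_less_upper:
  fixes K :: "('a::euclidean_space \<times> real) set"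
  assumes "closed K" and "(xs, ys) \<in> K" and "ys \<le> 0"
    and cont: "continuous_on UNIV f" and pos: "\<And>x. 0 < f x" and disj: "K \<inter> epi_graph f = {}"
    and "(x, yt) \<in> K" and "ym < yt"
    and gap: "infdist (x, ym) (epi_graph f) < infdist (x, ym) K"
  shows "equidist_lower K (epi_graph f) x < equidist_upper K (epi_graph f) x"
proof -
  let ?L = "epi_graph f"
  let ?S = "equidist_heights K ?L x"
  obtain yl where below: "\<And>y. y \<le> yl \<Longrightarrow> infdist (x, y) K < infdist (x, y) ?L"
    using infdist_less_infdist_epi_graph_below[OF cont pos assms(2,3)] by blast
  define a where "a = min yl ym"
  have "a \<le> ym" "infdist (x, a) K \<le> infdist (x, a) ?L"
    using below[of a] by (simp_all add: a_def)
  then obtain ya where ya: "ya \<le> ym" "ya \<in> ?S"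
    using equidist_height_between[of x a K ?L ym] gap max_absorb2[OF \<open>a \<le> ym\<close>] by auto
  then have "ya < ym"
    using gap by (cases "ya = ym") (auto simp: equidist_heights_def)
  have "infdist (x, yt) K \<le> infdist (x, yt) ?L"
    using \<open>(x, yt) \<in> K\<close> by (simp add: infdist_nonneg)
  then obtain yb where yb: "ym \<le> yb" "yb \<in> ?S"
    using equidist_height_between[of x yt K ?L ym] gap \<open>ym < yt\<close> by auto
  then have "ym < yb"
    using gap by (cases "yb = ym") (auto simp: equidist_heights_def)
  have "Inf ?S \<le> ya"
    using ya(2) equidist_heights_nonempty_bounded(2)[OF assms(1-3) cont pos disj] by (rule cInf_lower)
  moreover have "yb \<le> Sup ?S"
    using yb(2) equidist_heights_nonempty_bounded(3)[OF assms(1-3) cont pos disj] by (rule cSup_upper)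
  ultimately show ?thesis
    using \<open>ya < ym\<close> \<open>ym < yb\<close> by (simp add: equidist_lower_eq_Inf equidist_upper_eq_Sup)
qed

lemma convex_on_max:
  assumes "convex_on S f" and "convex_on S g"
  shows "convex_on S (\<lambda>x. max (f x) (g x))"
proof (rule convex_onI)
  show "convex S"
    using assms(1) by (rule convex_on_imp_convex)
  fix t :: real and x y
  assume "0 < t" "t < 1" "x \<in> S" "y \<in> S"
  then have "f ((1 - t) *\<^sub>R x + t *\<^sub>R y) \<le> (1 - t) * f x + t * f y"
    and "g ((1 - t) *\<^sub>R x + t *\<^sub>R y) \<le> (1 - t) * g x + t * g y"
    using convex_onD[OF assms(1)] convex_onD[OF assms(2)] by auto
  moreover have "(1 - t) * f x + t * f y \<le> (1 - t) * max (f x) (g x) + t * max (f y) (g y)"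
    and "(1 - t) * g x + t * g y \<le> (1 - t) * max (f x) (g x) + t * max (f y) (g y)"
    using \<open>0 < t\<close> \<open>t < 1\<close> by (intro add_mono mult_left_mono; simp)+
  ultimately show "max (f ((1 - t) *\<^sub>R x + t *\<^sub>R y)) (g ((1 - t) *\<^sub>R x + t *\<^sub>R y))
      \<le> (1 - t) * max (f x) (g x) + t * max (f y) (g y)"
    by simp
qed

lemma convex_epi_graph_near_supporting_point:
  fixes K :: "('a::euclidean_space \<times> real) set"
  assumes "bounded K" and "norm e = 1" and supp: "\<And>k. k \<in> K \<Longrightarrow> inner e (fst k) \<le> inner e x"
    and "0 < h" and "0 < \<gamma>"
  shows "\<exists>f. (\<forall>z. 0 < f z) \<and> convex_on UNIV f \<and> K \<inter> epi_graph f = {}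
           \<and> infdist (x, h) (epi_graph f) < \<gamma>"
proof -
  obtain B where B: "\<And>k. k \<in> K \<Longrightarrow> norm k \<le> B"
    using assms(1) by (auto simp: bounded_iff)
  define s where "s = \<gamma> / 2"
  define M where "M = (\<bar>B - h\<bar> + 1) / s"
  define f where "f z = h + M * max 0 (s - inner e (z - x))" for z
  have "0 < s"
    using \<open>0 < \<gamma>\<close> by (simp add: s_def)
  then have "0 < M"
    unfolding M_def by (intro divide_pos_pos) auto
  have "0 < f z" for z
    using \<open>0 < h\<close> \<open>0 < M\<close> by (simp add: f_def add_pos_nonneg)
  moreover have "convex_on UNIV (\<lambda>z. s - inner e (z - x))"
    by (rule convex_onI) (simp_all add: algebra_simps)
  then have "convex_on UNIV f"
    unfolding f_def using \<open>0 < M\<close>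
    by (intro convex_on_add convex_on_cmul convex_on_max) (simp_all add: convex_on_const)
  moreover have "K \<inter> epi_graph f = {}"
  proof (rule ccontr)
    assume "K \<inter> epi_graph f \<noteq> {}"
    then obtain u v where uv: "(u, v) \<in> K" "f u \<le> v" by auto
    \<comment> \<open>the wall has slope M, too steep for the bounded set K behind the hyperplane\<close>
    have "M * s \<le> M * max 0 (s - inner e (u - x))"
      using supp[OF uv(1)] \<open>0 < M\<close> by (intro mult_left_mono) (simp_all add: inner_diff_right)
    also have "\<dots> \<le> v - h"
      using uv(2) by (simp add: f_def)
    also have "v \<le> B"
      using B[OF uv(1)] norm_snd_le[of v u] by simp
    then have "v - h \<le> \<bar>B - h\<bar>" by simp
    finally show False
      using \<open>0 < s\<close> by (simp add: M_def)
  qed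
  moreover have "infdist (x, h) (epi_graph f) < \<gamma>"
  proof -
    have "inner e e = 1"
      using \<open>norm e = 1\<close> by (simp add: power2_norm_eq_inner[symmetric])
    then have "(x + s *\<^sub>R e, h) \<in> epi_graph f"
      by (simp add: f_def)
    moreover have "dist (x, h) (x + s *\<^sub>R e, h) = s"
      using \<open>norm e = 1\<close> \<open>0 < s\<close> by (simp add: dist_Pair_Pair dist_norm)
    ultimately have "infdist (x, h) (epi_graph f) \<le> s"
      by (metis infdist_le)
    then show ?thesis
      using \<open>0 < \<gamma>\<close> by (simp add: s_def)
  qed
  ultimately show ?thesis
    by blast
qed

lemma vertical_gap_notin_fst_lower_part:
  fixes K :: "('a::real_vector \<times> real) set"
  assumes "convex K" and "(x0, y1) \<notin> K" and "(x0, y2) \<in> K" and "y1 < y2"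
  shows "x0 \<notin> fst ` (K \<inter> {p. snd p \<le> y1})"
proof
  assume "x0 \<in> fst ` (K \<inter> {p. snd p \<le> y1})"
  then obtain y0 where "(x0, y0) \<in> K" "y0 \<le> y1"
    by force
  then have "y0 < y1"
    using assms(2) by (cases "y0 = y1") auto
  define \<mu> where "\<mu> = (y1 - y0) / (y2 - y0)"
  have "0 \<le> \<mu>" "\<mu> \<le> 1"
    using \<open>y0 < y1\<close> assms(4) by (simp_all add: \<mu>_def)
  then have "(x0, (1 - \<mu>) * y0 + \<mu> * y2) \<in> K"
    using convexD[OF assms(1) \<open>(x0, y0) \<in> K\<close> assms(3), of "1 - \<mu>" \<mu>] by simp
  moreover have "\<mu> * (y2 - y0) = y1 - y0"
    using \<open>y0 < y1\<close> assms(4) by (simp add: \<mu>_def)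
  then have "(1 - \<mu>) * y0 + \<mu> * y2 = y1"
    by (simp add: algebra_simps)
  ultimately have "(x0, y1) \<in> K"
    by simp
  then show False
    using assms(2) by contradiction
qed

lemma separating_hyperplane_closed_point_unit:
  fixes z :: "'a::euclidean_space"
  assumes "convex S" and "closed S" and "S \<noteq> {}" and "z \<notin> S"
  shows "\<exists>e \<beta>. norm e = 1 \<and> \<beta> < inner e z \<and> (\<forall>x\<in>S. inner e x < \<beta>)"
proof -
  obtain a b where ab: "inner a z < b" "\<And>x. x \<in> S \<Longrightarrow> b < inner a x"
    using separating_hyperplane_closed_point[OF assms(1,2,4)] by blast
  then have "a \<noteq> 0"
    using assms(3) by fastforce
  define e where "e = - (1 / norm a) *\<^sub>R a"
  have "norm e = 1"
    using \<open>a \<noteq> 0\<close> by (simp add: e_def)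
  moreover have "- b / norm a < inner e z"
    using ab(1) \<open>a \<noteq> 0\<close> by (simp add: e_def divide_strict_right_mono)
  moreover have "inner e x < - b / norm a" if "x \<in> S" for x
    using ab(2)[OF that] \<open>a \<noteq> 0\<close> by (simp add: e_def divide_strict_right_mono)
  ultimately show ?thesis
    by blast
qed

lemma convex_closed_fst_lower_part:
  fixes K :: "('a::euclidean_space \<times> real) set"
  assumes "convex K" and "compact K"
  shows "convex (fst ` (K \<inter> {p. snd p \<le> c}))" and "closed (fst ` (K \<inter> {p. snd p \<le> c}))"
proof -
  have "convex {p :: 'a \<times> real. snd p \<le> c}"
    by (rule convexI) (auto intro!: convex_bound_le)
  then show "convex (fst ` (K \<inter> {p. snd p \<le> c}))"
    using assms(1) by (intro convex_linear_image linear_fst convex_Int)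
  show "closed (fst ` (K \<inter> {p. snd p \<le> c}))"
    using assms(2)
    by (intro compact_imp_closed compact_continuous_image compact_Int_closed closed_Collect_le continuous_intros) auto
qed

lemma exists_convex_epi_graph_with_equidist_gap:
  fixes K :: "('a::euclidean_space \<times> real) set"
  assumes "convex K" and "compact K" and "(xs, ys) \<in> K" and "ys \<le> 0"
    and "0 < y1" and "y1 < y2" and "(x0, y1) \<notin> K" and "(x0, y2) \<in> K"
  shows "\<exists>f. (\<forall>x. 0 < f x) \<and> convex_on UNIV f \<and> K \<inter> epi_graph f = {}
           \<and> (\<exists>x. equidist_lower K (epi_graph f) x < equidist_upper K (epi_graph f) x)"
proof -
  have "closed K"
    using assms(2) by (rule compact_imp_closed)
  define A where "A = fst ` (K \<inter> {p. snd p \<le> y1})"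
  have "convex A" "closed A"
    unfolding A_def using convex_closed_fst_lower_part[OF assms(1,2)] by blast+
  have "A \<noteq> {}"
    unfolding A_def using assms(3,4,5) by force
  have "x0 \<notin> A"
    unfolding A_def using vertical_gap_notin_fst_lower_part[OF assms(1,7,8,6)] .
  obtain e \<beta> where "norm e = 1" "\<beta> < inner e x0" and eA: "\<forall>z\<in>A. inner e z < \<beta>"
    using separating_hyperplane_closed_point_unit[OF \<open>convex A\<close> \<open>closed A\<close> \<open>A \<noteq> {}\<close> \<open>x0 \<notin> A\<close>] by blast
  have "continuous_on K (\<lambda>k. inner e (fst k))"
    by (intro continuous_intros)
  then obtain k where "k \<in> K" and supp: "\<And>k'. k' \<in> K \<Longrightarrow> inner e (fst k') \<le> inner e (fst k)"
    using continuous_attains_sup[OF assms(2)] assms(3) by blast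
  obtain xF yF where k: "k = (xF, yF)"
    by (cases k)
  \<comment> \<open>the extreme point lies beyond the separating hyperplane, hence above height y1\<close>
  have "xF \<notin> A"
    using eA supp[OF assms(8)] \<open>\<beta> < inner e x0\<close> k by fastforce
  then have "y1 < yF" and "(xF, y1 / 2) \<notin> K"
    using \<open>k \<in> K\<close> k assms(5) unfolding A_def by force+
  then have "0 < infdist (xF, y1 / 2) K"
    using infdist_pos_not_in_closed[OF \<open>closed K\<close>] assms(3) by blast
  then obtain f where f: "\<forall>z. 0 < f z" "convex_on UNIV f" "K \<inter> epi_graph f = {}"
    and near: "infdist (xF, y1 / 2) (epi_graph f) < infdist (xF, y1 / 2) K"
    using convex_epi_graph_near_supporting_point[OF compact_imp_bounded[OF assms(2)] \<open>norm e = 1\<close>]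
      supp k assms(5) by (metis fst_conv half_gt_zero)
  have "continuous_on UNIV f"
    using convex_on_continuous[OF open_UNIV f(2)] .
  moreover have "y1 / 2 < yF"
    using \<open>y1 < yF\<close> assms(5) by simp
  ultimately have "equidist_lower K (epi_graph f) xF < equidist_upper K (epi_graph f) xF"
    using equidist_lower_less_upper[OF \<open>closed K\<close> assms(3,4) _ f(1)[rule_format] f(3)] \<open>k \<in> K\<close> k near
    by blast
  then show ?thesis
    using f by blast
qed

theorem corollary8:
  fixes K :: "('a::euclidean_space \<times> real) set" and xs :: 'a and ys :: real
  assumes "convex K" and "compact K" and "(xs, ys) \<in> K" and "ys \<le> 0"
  shows "((\<forall>f::'a \<Rightarrow> real. (\<forall>x. 0 < f x) \<and> continuous_on UNIV f \<and> K \<inter> epi_graph f = {}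
             \<longrightarrow> (\<forall>x. equidist_lower K (epi_graph f) x = equidist_upper K (epi_graph f) x))
          \<longleftrightarrow>
          (\<forall>f::'a \<Rightarrow> real. (\<forall>x. 0 < f x) \<and> convex_on UNIV f \<and> K \<inter> epi_graph f = {}
             \<longrightarrow> (\<forall>x. equidist_lower K (epi_graph f) x = equidist_upper K (epi_graph f) x)))
       \<and>
         ((\<forall>f::'a \<Rightarrow> real. (\<forall>x. 0 < f x) \<and> convex_on UNIV f \<and> K \<inter> epi_graph f = {}
             \<longrightarrow> (\<forall>x. equidist_lower K (epi_graph f) x = equidist_upper K (epi_graph f) x))
          \<longleftrightarrow>
          \<not> (\<exists>x0 y1 y2. 0 < y1 \<and> y1 < y2 \<and> (x0, y1) \<notin> K \<and> (x0, y2) \<in> K))"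
  (is "(?a \<longleftrightarrow> ?b) \<and> (?b \<longleftrightarrow> ?c)")
proof -
  have "?c \<longleftrightarrow> down_closed_above_zero K"
    by (auto simp: down_closed_above_zero_def)
  have "?c \<Longrightarrow> ?a"
    using equidist_lower_eq_upper_if_down_closed[OF compact_imp_closed[OF assms(2)] _ assms(3,4)]
      \<open>?c \<longleftrightarrow> down_closed_above_zero K\<close> by blast
  moreover have "?a \<Longrightarrow> ?b"
    using convex_on_continuous[OF open_UNIV] by blast
  moreover have "?b \<Longrightarrow> ?c"
    using exists_convex_epi_graph_with_equidist_gap[OF assms] by fastforce
  ultimately show ?thesis
    by blast
qed

end
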